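(* Let $n\ge4$, let $A_1,\dots,A_n$ be (not necessarily distinct) points in $\mathbb{R}^m$, set $A_{n+1}=A_1$, and for $i\ne j$ let $M_{ij}$ be the midpoint of the segment $A_iA_j$. For $1\le i<j\le n$ let $$c_{ij}=\sum_{r=0}^{2}(-1)^{r+1}\binom{n-j+i-1}{2-r}\binom{j-i-1}{r}.$$ Then $$\binom{n-2}{2}\sum_{i=1}^n|A_iA_{i+1}|^2=\sum_{\substack{1\le i<j\le n\\ 1<j-i<n-1}}c_{ij}|A_iA_j|^2+\sum_{1\le i<j<k<l\le n}4|M_{ik}M_{jl}|^2.$$ For $n=4$ this reduces to $|A_1A_2|^2+|A_2A_3|^2+|A_3A_4|^2+|A_4A_1|^2=|A_1A_3|^2+|A_2A_4|^2+4|M_{13}M_{24}|^2$.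
   Context: $|XY|$ denotes the Euclidean distance in $\mathbb{R}^m$. Binomial coefficients $\binom{a}{b}$ are $0$ when $b>a$ or $b<0$. *)

theory Defs
  imports "HOL-Analysis.Analysis"
begin

definition cij :: "nat \<Rightarrow> nat \<Rightarrow> nat \<Rightarrow> real" where
  "cij n i j = (\<Sum>r\<in>{0..2::nat}. (-1) ^ (r + 1) *
      real ((n - j + i - 1) choose (2 - r)) * real ((j - i - 1) choose r))"

end

theory Submission
  imports Defs
begin

text \<open>
  Expanding inner products, \<open>4 |M\<^sub>i\<^sub>k M\<^sub>j\<^sub>l|\<^sup>2\<close> is the sum of the squared sides minus the
  squared diagonals of the quadrilateral \<open>A\<^sub>i A\<^sub>j A\<^sub>k A\<^sub>l\<close>. Summed over all \<open>i < j < k < l\<close>,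
  a pair \<open>p < q\<close> with \<open>a\<close> indices strictly between them and \<open>b\<close> outside is a side of
  \<open>C(a,2) + C(b,2)\<close> of these quadrilaterals and a diagonal of \<open>a b\<close> of them. This net
  weight is \<open>-c\<^sub>p\<^sub>q\<close>, so the diagonals of the \<open>n\<close>-gon cancel, while for a side of the
  \<open>n\<close>-gon one of \<open>a, b\<close> is \<open>0\<close> and the other is \<open>n - 2\<close>.
\<close>

lemma dist_midpoint_midpoint_squared:
  fixes a b c d :: "'a::real_inner"
  shows "4 * (dist (midpoint a b) (midpoint c d))\<^sup>2 =
    (dist a c)\<^sup>2 + (dist a d)\<^sup>2 + (dist b c)\<^sup>2 + (dist b d)\<^sup>2 - (dist a b)\<^sup>2 - (dist c d)\<^sup>2"
  unfolding dist_norm midpoint_def power2_norm_eq_inner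
  by (simp add: inner_simps algebra_simps)

definition pairs_between :: "nat \<Rightarrow> nat \<Rightarrow> (nat \<times> nat) set" where
  "pairs_between a b = {(x, y). a < x \<and> x < y \<and> y < b}"

definition increasing_quadruples :: "nat \<Rightarrow> (nat \<times> nat \<times> nat \<times> nat) set" where
  "increasing_quadruples n = {(i, j, k, l). 1 \<le> i \<and> i < j \<and> j < k \<and> k < l \<and> l \<le> n}"

lemma finite_pairs_between [simp]: "finite (pairs_between a b)"
  by (rule finite_subset[of _ "{..<b} \<times> {..<b}"]) (auto simp: pairs_between_def)

lemma finite_increasing_quadruples [simp]: "finite (increasing_quadruples n)"
  by (rule finite_subset[of _ "{..n} \<times> {..n} \<times> {..n} \<times> {..n}"]) (auto simp: increasing_quadruples_def)

lemma card_pairs_between: "card (pairs_between a b) = (b - a - 1) choose 2"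
proof (induction b)
  case 0
  then show ?case by (simp add: pairs_between_def)
next
  case (Suc b)
  have split: "pairs_between a (Suc b) = pairs_between a b \<union> (\<lambda>x. (x, b)) ` {a<..<b}"
    by (auto simp: pairs_between_def)
  have "card (pairs_between a (Suc b)) = card (pairs_between a b) + card ((\<lambda>x. (x, b)) ` {a<..<b})"
    unfolding split by (rule card_Un_disjoint) (simp, simp, force simp: pairs_between_def)
  also have "\<dots> = ((b - a - 1) choose 2) + (b - a - 1)"
    by (simp add: Suc.IH card_image inj_on_def)
  also have "\<dots> = (Suc b - a - 1) choose 2"
  proof (cases "a < b")
    case True
    then have "Suc b - a - 1 = Suc (b - a - 1)" by simp
    then show ?thesis by (simp add: numeral_2_eq_2)
  qed simp
  finally show ?case .
qed

lemma sum_comp_by_fibres: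
  fixes g :: "'b \<Rightarrow> 'c::semiring_1"
  assumes "finite S" "finite T" "h ` S \<subseteq> T"
    and "\<And>y. y \<in> T \<Longrightarrow> bij_betw (e y) (F y) {x \<in> S. h x = y}"
  shows "(\<Sum>x\<in>S. g (h x)) = (\<Sum>y\<in>T. of_nat (card (F y)) * g y)"
proof -
  have "(\<Sum>x\<in>S. g (h x)) = (\<Sum>y\<in>T. \<Sum>x\<in>{x \<in> S. h x = y}. g (h x))"
    using sum.group[OF assms(1-3), of "\<lambda>x. g (h x)"] by simp
  also have "\<dots> = (\<Sum>y\<in>T. of_nat (card (F y)) * g y)"
    by (intro sum.cong refl) (simp add: bij_betw_same_card[OF assms(4)])
  finally show ?thesis .
qed

lemma sum_increasing_quadruples_by_fibres:
  assumes "h ` increasing_quadruples n \<subseteq> pairs_between 0 (Suc n)"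
    and "\<And>p q. (p, q) \<in> pairs_between 0 (Suc n) \<Longrightarrow>
      bij_betw (e p q) (F p q) {x \<in> increasing_quadruples n. h x = (p, q)}"
  shows "(\<Sum>x\<in>increasing_quadruples n. case_prod D (h x)) =
    (\<Sum>(p, q)\<in>pairs_between 0 (Suc n). real (card (F p q)) * D p q)"
proof -
  have "(\<Sum>x\<in>increasing_quadruples n. case_prod D (h x)) =
      (\<Sum>y\<in>pairs_between 0 (Suc n). real (card (case_prod F y)) * case_prod D y)"
    by (rule sum_comp_by_fibres[OF finite_increasing_quadruples finite_pairs_between,
          where e = "case_prod e"]) (use assms in auto)
  then show ?thesis by (simp add: split_def)
qed

lemma sum_increasing_quadruples_ij:
  "(\<Sum>(i, j, k, l)\<in>increasing_quadruples n. D i j) =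
   (\<Sum>(p, q)\<in>pairs_between 0 (Suc n). real ((n - q) choose 2) * D p q)"
proof -
  have "(\<Sum>x\<in>increasing_quadruples n. case_prod D ((\<lambda>(i, j, k, l). (i, j)) x)) =
      (\<Sum>(p, q)\<in>pairs_between 0 (Suc n). real (card (pairs_between q (Suc n))) * D p q)"
    by (rule sum_increasing_quadruples_by_fibres[where e = "\<lambda>p q (k, l). (p, q, k, l)"])
      (auto simp: increasing_quadruples_def pairs_between_def bij_betw_def inj_on_def image_iff)
  then show ?thesis by (simp add: card_pairs_between split_def)
qed

lemma sum_increasing_quadruples_il:
  "(\<Sum>(i, j, k, l)\<in>increasing_quadruples n. D i l) =
   (\<Sum>(p, q)\<in>pairs_between 0 (Suc n). real ((q - p - 1) choose 2) * D p q)"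
proof -
  have "(\<Sum>x\<in>increasing_quadruples n. case_prod D ((\<lambda>(i, j, k, l). (i, l)) x)) =
      (\<Sum>(p, q)\<in>pairs_between 0 (Suc n). real (card (pairs_between p q)) * D p q)"
    by (rule sum_increasing_quadruples_by_fibres[where e = "\<lambda>p q (j, k). (p, j, k, q)"])
      (auto simp: increasing_quadruples_def pairs_between_def bij_betw_def inj_on_def image_iff)
  then show ?thesis by (simp add: card_pairs_between split_def)
qed

lemma sum_increasing_quadruples_kl:
  "(\<Sum>(i, j, k, l)\<in>increasing_quadruples n. D k l) =
   (\<Sum>(p, q)\<in>pairs_between 0 (Suc n). real ((p - 1) choose 2) * D p q)"
proof -
  have "(\<Sum>x\<in>increasing_quadruples n. case_prod D ((\<lambda>(i, j, k, l). (k, l)) x)) =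
      (\<Sum>(p, q)\<in>pairs_between 0 (Suc n). real (card (pairs_between 0 p)) * D p q)"
    by (rule sum_increasing_quadruples_by_fibres[where e = "\<lambda>p q (i, j). (i, j, p, q)"])
      (auto simp: increasing_quadruples_def pairs_between_def bij_betw_def inj_on_def image_iff)
  then show ?thesis by (simp add: card_pairs_between split_def)
qed

lemma sum_increasing_quadruples_jk:
  "(\<Sum>(i, j, k, l)\<in>increasing_quadruples n. D j k) =
   (\<Sum>(p, q)\<in>pairs_between 0 (Suc n). real ((p - 1) * (n - q)) * D p q)"
proof -
  have "(\<Sum>x\<in>increasing_quadruples n. case_prod D ((\<lambda>(i, j, k, l). (j, k)) x)) =
      (\<Sum>(p, q)\<in>pairs_between 0 (Suc n). real (card ({0<..<p} \<times> {q<..<Suc n})) * D p q)"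
    by (rule sum_increasing_quadruples_by_fibres[where e = "\<lambda>p q (i, l). (i, p, q, l)"])
      (auto simp: increasing_quadruples_def pairs_between_def bij_betw_def inj_on_def image_iff)
  then show ?thesis by (simp add: split_def)
qed

lemma sum_increasing_quadruples_ik:
  "(\<Sum>(i, j, k, l)\<in>increasing_quadruples n. D i k) =
   (\<Sum>(p, q)\<in>pairs_between 0 (Suc n). real ((q - p - 1) * (n - q)) * D p q)"
proof -
  have "(\<Sum>x\<in>increasing_quadruples n. case_prod D ((\<lambda>(i, j, k, l). (i, k)) x)) =
      (\<Sum>(p, q)\<in>pairs_between 0 (Suc n). real (card ({p<..<q} \<times> {q<..<Suc n})) * D p q)"
    by (rule sum_increasing_quadruples_by_fibres[where e = "\<lambda>p q (j, l). (p, j, q, l)"])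
      (auto simp: increasing_quadruples_def pairs_between_def bij_betw_def inj_on_def image_iff)
  then show ?thesis by (simp add: split_def)
qed

lemma sum_increasing_quadruples_jl:
  "(\<Sum>(i, j, k, l)\<in>increasing_quadruples n. D j l) =
   (\<Sum>(p, q)\<in>pairs_between 0 (Suc n). real ((p - 1) * (q - p - 1)) * D p q)"
proof -
  have "(\<Sum>x\<in>increasing_quadruples n. case_prod D ((\<lambda>(i, j, k, l). (j, l)) x)) =
      (\<Sum>(p, q)\<in>pairs_between 0 (Suc n). real (card ({0<..<p} \<times> {p<..<q})) * D p q)"
    by (rule sum_increasing_quadruples_by_fibres[where e = "\<lambda>p q (i, k). (i, p, k, q)"])
      (auto simp: increasing_quadruples_def pairs_between_def bij_betw_def inj_on_def image_iff)
  then show ?thesis by (simp add: split_def)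
qed


lemma choose_two_add: "(x + y) choose 2 = (x choose 2) + x * y + (y choose 2)"
  using vandermonde[where r = 2 and m = x and n = y] by (simp add: numeral_2_eq_2 atMost_Suc)

definition arc_weight :: "nat \<Rightarrow> nat \<Rightarrow> real" where
  "arc_weight a b = real (a choose 2) + real (b choose 2) - real a * real b"

lemma cij_eq_arc_weight: "cij n p q = - arc_weight (q - p - 1) (n - q + p - 1)"
  by (simp add: cij_def arc_weight_def numeral_2_eq_2 atLeast0_atMost_Suc)

lemma arc_weight_eq_quadruple_counts:
  assumes "(p, q) \<in> pairs_between 0 (Suc n)"
  shows "arc_weight (q - p - 1) (n - q + p - 1) =
    real ((n - q) choose 2) + real ((q - p - 1) choose 2) + real (p - 1) * real (n - q)
    + real ((p - 1) choose 2) - real (q - p - 1) * real (n - q) - real (p - 1) * real (q - p - 1)"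
proof -
  have outer: "n - q + p - 1 = (n - q) + (p - 1)"
    using assms by (simp add: pairs_between_def)
  show ?thesis
    unfolding arc_weight_def outer choose_two_add of_nat_add of_nat_mult by (simp add: algebra_simps)
qed

lemma sum_increasing_quadruples_dist_midpoints:
  fixes A :: "nat \<Rightarrow> 'a::real_inner"
  shows "(\<Sum>(i, j, k, l)\<in>increasing_quadruples n.
      4 * (dist (midpoint (A i) (A k)) (midpoint (A j) (A l)))\<^sup>2) =
    (\<Sum>(p, q)\<in>pairs_between 0 (Suc n). arc_weight (q - p - 1) (n - q + p - 1) * (dist (A p) (A q))\<^sup>2)"
proof -
  define D where "D p q = (dist (A p) (A q))\<^sup>2" for p q
  have "(\<Sum>(i, j, k, l)\<in>increasing_quadruples n.
      4 * (dist (midpoint (A i) (A k)) (midpoint (A j) (A l)))\<^sup>2) =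
    (\<Sum>(i, j, k, l)\<in>increasing_quadruples n. D i j + D i l + D j k + D k l - D i k - D j l)"
    by (intro sum.cong refl) (auto simp: dist_midpoint_midpoint_squared D_def dist_commute)
  also have "\<dots> = (\<Sum>(i, j, k, l)\<in>increasing_quadruples n. D i j)
      + (\<Sum>(i, j, k, l)\<in>increasing_quadruples n. D i l)
      + (\<Sum>(i, j, k, l)\<in>increasing_quadruples n. D j k)
      + (\<Sum>(i, j, k, l)\<in>increasing_quadruples n. D k l)
      - (\<Sum>(i, j, k, l)\<in>increasing_quadruples n. D i k)
      - (\<Sum>(i, j, k, l)\<in>increasing_quadruples n. D j l)"
    by (simp add: split_def sum.distrib sum_subtractf)
  also have "\<dots> = (\<Sum>(p, q)\<in>pairs_between 0 (Suc n).
      (real ((n - q) choose 2) + real ((q - p - 1) choose 2) + real (p - 1) * real (n - q)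
       + real ((p - 1) choose 2) - real (q - p - 1) * real (n - q)
       - real (p - 1) * real (q - p - 1)) * D p q)"
    unfolding sum_increasing_quadruples_ij sum_increasing_quadruples_il sum_increasing_quadruples_jk
      sum_increasing_quadruples_kl sum_increasing_quadruples_ik sum_increasing_quadruples_jl
    by (simp add: split_def ring_distribs sum.distrib sum_subtractf)
  also have "\<dots> = (\<Sum>(p, q)\<in>pairs_between 0 (Suc n). arc_weight (q - p - 1) (n - q + p - 1) * D p q)"
    by (rule sum.cong[OF refl]) (simp only: split_paired_all case_prod_conv arc_weight_eq_quadruple_counts)
  finally show ?thesis unfolding D_def .
qed

definition polygon_sides :: "nat \<Rightarrow> (nat \<times> nat) set" where
  "polygon_sides n = {(i, j). 1 \<le> i \<and> i < j \<and> j \<le> n \<and> (j = Suc i \<or> (i = 1 \<and> j = n))}"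

definition polygon_diagonals :: "nat \<Rightarrow> (nat \<times> nat) set" where
  "polygon_diagonals n = {(i, j). 1 \<le> i \<and> i < j \<and> j \<le> n \<and> 1 < j - i \<and> j - i < n - 1}"

lemma sum_pairs_between_sides_diagonals:
  "(\<Sum>(i, j)\<in>pairs_between 0 (Suc n). f i j) =
    (\<Sum>(i, j)\<in>polygon_sides n. f i j) + (\<Sum>(i, j)\<in>polygon_diagonals n. f i j)"
proof -
  have "pairs_between 0 (Suc n) = polygon_sides n \<union> polygon_diagonals n"
    by (auto simp: pairs_between_def polygon_sides_def polygon_diagonals_def)
  moreover have "polygon_sides n \<inter> polygon_diagonals n = {}"
    by (auto simp: polygon_sides_def polygon_diagonals_def)
  moreover have "finite (polygon_sides n)" "finite (polygon_diagonals n)"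
    using finite_pairs_between[of 0 "Suc n"] calculation(1) by auto
  ultimately show ?thesis
    by (simp add: sum.union_disjoint)
qed

lemma sum_cij_diagonals_add_arc_weights:
  "(\<Sum>(i, j)\<in>polygon_diagonals n. cij n i j * f i j)
    + (\<Sum>(i, j)\<in>pairs_between 0 (Suc n). arc_weight (j - i - 1) (n - j + i - 1) * f i j)
   = (\<Sum>(i, j)\<in>polygon_sides n. arc_weight (j - i - 1) (n - j + i - 1) * f i j)"
proof -
  have "(\<Sum>(i, j)\<in>polygon_diagonals n. cij n i j * f i j) =
      - (\<Sum>(i, j)\<in>polygon_diagonals n. arc_weight (j - i - 1) (n - j + i - 1) * f i j)"
    by (simp add: cij_eq_arc_weight split_def sum_negf)
  then show ?thesis
    unfolding sum_pairs_between_sides_diagonals by simp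
qed

lemma arc_weight_polygon_side:
  assumes "(p, q) \<in> polygon_sides n"
  shows "arc_weight (q - p - 1) (n - q + p - 1) = real ((n - 2) choose 2)"
  using assms by (auto simp: polygon_sides_def arc_weight_def numeral_2_eq_2)

lemma sum_polygon_sides_arc_weight:
  "(\<Sum>(i, j)\<in>polygon_sides n. arc_weight (j - i - 1) (n - j + i - 1) * f i j) =
    real ((n - 2) choose 2) * (\<Sum>(i, j)\<in>polygon_sides n. f i j)"
  unfolding sum_distrib_left
  by (rule sum.cong[OF refl]) (simp only: split_paired_all case_prod_conv arc_weight_polygon_side)

lemma sum_polygon_sides:
  assumes "3 \<le> n" and "\<And>i j. f i j = f j i"
  shows "(\<Sum>(i, j)\<in>polygon_sides n. f i j) = (\<Sum>i=1..n. f i (if i = n then 1 else i + 1))"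
proof -
  have "polygon_sides n = insert (1, n) ((\<lambda>i. (i, Suc i)) ` {1..<n})"
    using assms(1) by (auto simp: polygon_sides_def)
  moreover have "(1, n) \<notin> (\<lambda>i. (i, Suc i)) ` {1..<n}"
    using assms(1) by auto
  ultimately have "(\<Sum>(i, j)\<in>polygon_sides n. f i j) = f 1 n + (\<Sum>i=1..<n. f i (Suc i))"
    by (simp add: sum.reindex inj_on_def)
  also have "\<dots> = f n 1 + (\<Sum>i=1..<n. f i (if i = n then 1 else i + 1))"
    using assms(2)[of 1 n] by (auto intro!: sum.cong)
  also have "\<dots> = (\<Sum>i=1..n. f i (if i = n then 1 else i + 1))"
    using assms(1) by (simp add: sum.last_plus)
  finally show ?thesis .
qed

theorem corollary3p4:
  fixes n :: nat and A :: "nat \<Rightarrow> 'a::euclidean_space"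
  assumes "n \<ge> 4"
  shows "real ((n - 2) choose 2) *
      (\<Sum>i=1..n. (dist (A i) (A (if i = n then 1 else i + 1)))\<^sup>2)
    = (\<Sum>(i, j) \<in> {(i, j). 1 \<le> i \<and> i < j \<and> j \<le> n \<and> 1 < j - i \<and> j - i < n - 1}.
         cij n i j * (dist (A i) (A j))\<^sup>2)
      + (\<Sum>(i, j, k, l) \<in> {(i, j, k, l). 1 \<le> i \<and> i < j \<and> j < k \<and> k < l \<and> l \<le> n}.
         4 * (dist (midpoint (A i) (A k)) (midpoint (A j) (A l)))\<^sup>2)"
proof -
  let ?d = "\<lambda>i j. (dist (A i) (A j))\<^sup>2"
  have "real ((n - 2) choose 2) * (\<Sum>i=1..n. ?d i (if i = n then 1 else i + 1))
      = real ((n - 2) choose 2) * (\<Sum>(i, j)\<in>polygon_sides n. ?d i j)"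
    using assms by (simp add: sum_polygon_sides dist_commute)
  also have "\<dots> = (\<Sum>(i, j)\<in>polygon_sides n. arc_weight (j - i - 1) (n - j + i - 1) * ?d i j)"
    by (rule sum_polygon_sides_arc_weight[symmetric])
  also have "\<dots> = (\<Sum>(i, j)\<in>polygon_diagonals n. cij n i j * ?d i j)
      + (\<Sum>(i, j, k, l)\<in>increasing_quadruples n.
          4 * (dist (midpoint (A i) (A k)) (midpoint (A j) (A l)))\<^sup>2)"
    by (simp only: sum_increasing_quadruples_dist_midpoints sum_cij_diagonals_add_arc_weights)
  finally show ?thesis
    by (simp only: polygon_diagonals_def increasing_quadruples_def)
qed

end
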